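(* Let $(X,d)$ be a finite pseudometric space and let $A\subseteq X$ be a nonempty proper subset such that $d(i,j)=0$ for all $i,j\in A$. Let $\sigma:=A\,|\,A^c$. Then for every $\alpha_\sigma\ge0$, $$\operatorname{LIP}(X,d+\alpha_\sigma\delta_\sigma)=\operatorname{LIP}(X,d)+\alpha_\sigma S_\sigma .$$
   Context: Let $X$ be a finite set, $n:=|X|$, $\{\mathbbm 1_k\}_{k\in X}$ the standard basis of $\mathbb R^X$, and $\mathbbm 1_A:=\sum_{x\in A}\mathbbm 1_x$. A split of $X$ is an unordered pair of nonempty disjoint subsets $A,B$ with $A\cup B=X$, written $A|B$. For a split $\sigma=A|B$, $\delta_\sigma(i,j)=0$ if $i,j$ lie in the same side and $1$ otherwise, and $S_\sigma:=\operatorname{conv}\{\tfrac{|B|}{n}\mathbbm 1_A-\tfrac{|A|}{n}\mathbbm 1_B,\ \tfrac{|A|}{n}\mathbbm 1_B-\tfrac{|B|}{n}\mathbbm 1_A\}\subseteq\mathbb R^X$; $cS_\sigma$ denotes its scaling by $c\ge 0$, and $+$ is Minkowski sum. For a pseudometric $d$ on $X$ (symmetric, nonnegative, $d(x,x)=0$, triangle inequality; distinct points may have distance 0), $\operatorname{LIP}(X,d):=\{x\in\mathbb R^X\mid\sum_i x_i=0,\ x_i-x_j\le d(i,j)\ \forall i,j\in X\}$. *)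

theory Defs
  imports Complex_Main
begin

text \<open>Vectors in R^X are modelled as functions 'a => real vanishing outside X.\<close>

definition pseudometric_on :: "'a set \<Rightarrow> ('a \<Rightarrow> 'a \<Rightarrow> real) \<Rightarrow> bool" where
  "pseudometric_on X d \<longleftrightarrow>
     (\<forall>i\<in>X. d i i = 0) \<and>
     (\<forall>i\<in>X. \<forall>j\<in>X. d i j = d j i \<and> d i j \<ge> 0) \<and>
     (\<forall>i\<in>X. \<forall>j\<in>X. \<forall>k\<in>X. d i k \<le> d i j + d j k)"

definition indic_vec :: "'a set \<Rightarrow> 'a \<Rightarrow> real" where
  "indic_vec A = (\<lambda>x. if x \<in> A then 1 else 0)"

definition LIP :: "'a set \<Rightarrow> ('a \<Rightarrow> 'a \<Rightarrow> real) \<Rightarrow> ('a \<Rightarrow> real) set" where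
  "LIP X d = {x. (\<forall>i. i \<notin> X \<longrightarrow> x i = 0) \<and> (\<Sum>i\<in>X. x i) = 0 \<and>
                  (\<forall>i\<in>X. \<forall>j\<in>X. x i - x j \<le> d i j)}"

definition split_delta :: "'a set \<Rightarrow> 'a set \<Rightarrow> 'a \<Rightarrow> 'a \<Rightarrow> real" where
  "split_delta A B i j = (if (i \<in> A \<and> j \<in> A) \<or> (i \<in> B \<and> j \<in> B) then 0 else 1)"

definition split_segment :: "'a set \<Rightarrow> 'a set \<Rightarrow> ('a \<Rightarrow> real) set" where
  "split_segment A B =
     (let n = real (card (A \<union> B));
          v = (\<lambda>i. (real (card B) / n) * indic_vec A i - (real (card A) / n) * indic_vec B i)
      in {(\<lambda>i. t * v i + (1 - t) * (- v i)) | t. 0 \<le> t \<and> t \<le> 1})"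
  \<comment> \<open>convex hull of the two points v and -v, written out as convex combinations\<close>

definition minkowski_sum :: "('a \<Rightarrow> real) set \<Rightarrow> ('a \<Rightarrow> real) set \<Rightarrow> ('a \<Rightarrow> real) set" where
  "minkowski_sum P Q = {(\<lambda>i. p i + q i) | p q. p \<in> P \<and> q \<in> Q}"

end

theory Submission
  imports Defs
begin

text \<open>Write \<open>v\<close> for the vertex of the segment \<open>S\<^sub>\<sigma>\<close>, so that \<open>\<alpha> S\<^sub>\<sigma> = {s v | \<bar>s\<bar> \<le> \<alpha>}\<close>.
  Since \<open>\<bar>v i - v j\<bar> = \<delta>\<^sub>\<sigma> i j\<close>, adding \<open>s v\<close> to a point of \<open>LIP(X,d)\<close> lands in
  \<open>LIP(X, d + \<alpha> \<delta>\<^sub>\<sigma>)\<close>. Conversely, for \<open>x\<close> in the latter, \<open>x - s v\<close> is \<open>d\<close>-Lipschitz as soon as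
  \<open>s\<close> lies between finitely many lower bounds \<open>x i - x j - d i j\<close> and upper bounds
  \<open>x i - x j + d j i\<close> (\<open>i \<in> A\<close>, \<open>j \<in> A\<^sup>c\<close>), together with \<open>-\<alpha> \<le> s \<le> \<alpha>\<close>. Every lower bound is below
  every upper bound: this is where \<open>d = 0\<close> on \<open>A\<close> enters, via the triangle inequality through
  two points of \<open>A\<close>.\<close>

definition split_vector :: "'a set \<Rightarrow> 'a set \<Rightarrow> 'a \<Rightarrow> real" where
  "split_vector A B =
     (\<lambda>i. real (card B) / real (card (A \<union> B)) * indic_vec A i
          - real (card A) / real (card (A \<union> B)) * indic_vec B i)"

lemma split_vector_outside: "i \<notin> A \<union> B \<Longrightarrow> split_vector A B i = 0"
  by (simp add: split_vector_def indic_vec_def)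

lemma split_vector_left:
  "A \<inter> B = {} \<Longrightarrow> i \<in> A \<Longrightarrow> split_vector A B i = real (card B) / real (card (A \<union> B))"
  by (auto simp: split_vector_def indic_vec_def)

lemma split_vector_right:
  "A \<inter> B = {} \<Longrightarrow> i \<in> B \<Longrightarrow> split_vector A B i = - real (card A) / real (card (A \<union> B))"
  by (auto simp: split_vector_def indic_vec_def)

lemma split_vector_cross:
  assumes "finite A" "finite B" "A \<inter> B = {}" "i \<in> A" "j \<in> B"
  shows "split_vector A B i - split_vector A B j = 1"
proof -
  have n: "real (card (A \<union> B)) = real (card A) + real (card B)"
    using card_Un_disjoint[OF assms(1-3)] by simp
  have "card A > 0"
    using assms(1,4) card_gt_0_iff by blast
  then have "(real (card B) + real (card A)) / real (card (A \<union> B)) = 1"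
    unfolding n by simp
  then show ?thesis
    using assms(3-5) by (simp add: split_vector_left split_vector_right add_divide_distrib)
qed

lemma abs_split_vector_diff:
  assumes "finite A" "finite B" "A \<inter> B = {}" "i \<in> A \<union> B" "j \<in> A \<union> B"
  shows "\<bar>split_vector A B i - split_vector A B j\<bar> = split_delta A B i j"
  using assms split_vector_cross[OF assms(1-3), of i j] split_vector_cross[OF assms(1-3), of j i]
  by (auto simp: split_delta_def split_vector_left split_vector_right)

lemma sum_split_vector:
  assumes "finite A" "finite B" "A \<inter> B = {}"
  shows "(\<Sum>i\<in>A \<union> B. split_vector A B i) = 0"
proof -
  have "(\<Sum>i\<in>A \<union> B. split_vector A B i)
        = (\<Sum>i\<in>A. split_vector A B i) + (\<Sum>i\<in>B. split_vector A B i)"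
    using assms by (rule sum.union_disjoint)
  also have "\<dots> = real (card A) * (real (card B) / real (card (A \<union> B)))
                 + real (card B) * (- real (card A) / real (card (A \<union> B)))"
    using assms(3) by (simp add: split_vector_left split_vector_right)
  also have "\<dots> = 0"
    by (simp add: field_simps)
  finally show ?thesis .
qed

lemma split_segment_eq:
  "split_segment A B = {(\<lambda>i. s * split_vector A B i) | s. -1 \<le> s \<and> s \<le> 1}"
proof -
  have combination: "(\<lambda>i. t * v i + (1 - t) * - v i) = (\<lambda>i. (2 * t - 1) * v i)"
    for t and v :: "'a \<Rightarrow> real"
    by (simp add: algebra_simps)
  have "(\<exists>t. w = (\<lambda>i. (2 * t - 1) * v i) \<and> 0 \<le> t \<and> t \<le> 1)
        \<longleftrightarrow> (\<exists>s. w = (\<lambda>i. s * v i) \<and> -1 \<le> s \<and> s \<le> 1)" for w v :: "'a \<Rightarrow> real"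
  proof
    assume "\<exists>s. w = (\<lambda>i. s * v i) \<and> -1 \<le> s \<and> s \<le> 1"
    then obtain s where "w = (\<lambda>i. s * v i)" "-1 \<le> s" "s \<le> 1" by blast
    then show "\<exists>t. w = (\<lambda>i. (2 * t - 1) * v i) \<and> 0 \<le> t \<and> t \<le> 1"
      by (intro exI[of _ "(s + 1) / 2"]) (simp add: field_simps)
  qed force
  moreover have "split_segment A B = {(\<lambda>i. t * split_vector A B i + (1 - t) * - split_vector A B i)
                                       | t. 0 \<le> t \<and> t \<le> 1}"
    by (simp only: split_segment_def split_vector_def Let_def)
  ultimately show ?thesis
    unfolding combination by (simp only: set_eq_iff mem_Collect_eq) blast
qed

lemma scaled_split_segment_eq:
  assumes "\<alpha> \<ge> 0"
  shows "(\<lambda>v i. \<alpha> * v i) ` split_segment A B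
         = {(\<lambda>i. s * split_vector A B i) | s. \<bar>s\<bar> \<le> \<alpha>}"
proof -
  have "(\<exists>t. w = (\<lambda>i. (\<alpha> * t) * v i) \<and> -1 \<le> t \<and> t \<le> 1)
        \<longleftrightarrow> (\<exists>s. w = (\<lambda>i. s * v i) \<and> \<bar>s\<bar> \<le> \<alpha>)" for w v :: "'a \<Rightarrow> real"
  proof
    assume "\<exists>t. w = (\<lambda>i. (\<alpha> * t) * v i) \<and> -1 \<le> t \<and> t \<le> 1"
    then obtain t where "w = (\<lambda>i. (\<alpha> * t) * v i)" "\<bar>t\<bar> \<le> 1" by auto
    moreover have "\<bar>\<alpha> * t\<bar> \<le> \<alpha>" if "\<bar>t\<bar> \<le> 1"
      using assms mult_left_mono[OF that assms] by (simp add: abs_mult)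
    ultimately show "\<exists>s. w = (\<lambda>i. s * v i) \<and> \<bar>s\<bar> \<le> \<alpha>" by blast
  next
    assume "\<exists>s. w = (\<lambda>i. s * v i) \<and> \<bar>s\<bar> \<le> \<alpha>"
    then obtain s where w: "w = (\<lambda>i. s * v i)" and s: "\<bar>s\<bar> \<le> \<alpha>" by blast
    show "\<exists>t. w = (\<lambda>i. (\<alpha> * t) * v i) \<and> -1 \<le> t \<and> t \<le> 1"
    proof (cases "\<alpha> = 0")
      case True
      then show ?thesis using w s by (intro exI[of _ 0]) auto
    next
      case False
      then show ?thesis using w s assms by (intro exI[of _ "s / \<alpha>"]) (auto simp: field_simps)
    qed
  qed
  moreover have "(\<lambda>v i. \<alpha> * v i) ` split_segment A B
                 = {(\<lambda>i. (\<alpha> * t) * split_vector A B i) | t. -1 \<le> t \<and> t \<le> 1}"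
    unfolding split_segment_eq by (auto simp: mult.assoc)
  ultimately show ?thesis
    by (simp only: set_eq_iff mem_Collect_eq) blast
qed

lemma mem_minkowski_sum_scaled:
  "x \<in> minkowski_sum P {(\<lambda>i. s * w i) | s. S s} \<longleftrightarrow> (\<exists>s. S s \<and> (\<lambda>i. x i - s * w i) \<in> P)"
proof
  assume "x \<in> minkowski_sum P {(\<lambda>i. s * w i) | s. S s}"
  then obtain p s where "p \<in> P" "S s" "x = (\<lambda>i. p i + s * w i)"
    unfolding minkowski_sum_def by blast
  then show "\<exists>s. S s \<and> (\<lambda>i. x i - s * w i) \<in> P" by auto
next
  assume "\<exists>s. S s \<and> (\<lambda>i. x i - s * w i) \<in> P"
  then obtain s where "S s" "(\<lambda>i. x i - s * w i) \<in> P" by blast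
  then show "x \<in> minkowski_sum P {(\<lambda>i. s * w i) | s. S s}"
    unfolding minkowski_sum_def by force
qed

lemma LIP_add_split_vector:
  assumes "finite A" "finite B" "A \<inter> B = {}"
    and "y \<in> LIP (A \<union> B) d" and "\<bar>s\<bar> \<le> \<alpha>"
  shows "(\<lambda>i. y i + s * split_vector A B i) \<in> LIP (A \<union> B) (\<lambda>i j. d i j + \<alpha> * split_delta A B i j)"
proof -
  let ?v = "split_vector A B"
  have lip: "s * (?v i - ?v j) \<le> \<alpha> * split_delta A B i j" if ij: "i \<in> A \<union> B" "j \<in> A \<union> B" for i j
  proof -
    have "s * (?v i - ?v j) \<le> \<bar>s\<bar> * \<bar>?v i - ?v j\<bar>"
      by (metis abs_ge_self abs_mult)
    also have "\<dots> \<le> \<alpha> * \<bar>?v i - ?v j\<bar>"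
      using assms(5) by (simp add: mult_right_mono)
    finally show ?thesis
      using abs_split_vector_diff[OF assms(1-3) ij] by simp
  qed
  show ?thesis
    unfolding LIP_def
  proof (intro CollectI conjI allI impI ballI)
    fix i
    assume "i \<notin> A \<union> B"
    then show "y i + s * ?v i = 0"
      using assms(4) split_vector_outside[of i A B] unfolding LIP_def by simp
  next
    show "(\<Sum>i\<in>A \<union> B. y i + s * ?v i) = 0"
      using assms(4) sum_split_vector[OF assms(1-3)]
      unfolding LIP_def by (simp add: sum.distrib flip: sum_distrib_left)
  next
    fix i j
    assume ij: "i \<in> A \<union> B" "j \<in> A \<union> B"
    then have "y i - y j \<le> d i j"
      using assms(4) unfolding LIP_def by blast
    then show "y i + s * ?v i - (y j + s * ?v j) \<le> d i j + \<alpha> * split_delta A B i j"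
      using lip[OF ij] by (simp add: algebra_simps)
  qed
qed

lemma LIP_diff_split_vector:
  assumes "finite A" "finite B" "A \<inter> B = {}"
    and x: "x \<in> LIP (A \<union> B) (\<lambda>i j. d i j + \<alpha> * split_delta A B i j)"
    and lower: "\<forall>i\<in>A. \<forall>j\<in>B. x i - x j - d i j \<le> L"
    and upper: "\<forall>i\<in>A. \<forall>j\<in>B. L \<le> x i - x j + d j i"
  shows "(\<lambda>i. x i - L * split_vector A B i) \<in> LIP (A \<union> B) d"
proof -
  let ?v = "split_vector A B"
  have lip: "x i - x j - L * (?v i - ?v j) \<le> d i j" if ij: "i \<in> A \<union> B" "j \<in> A \<union> B" for i j
  proof -
    have x_ij: "x i - x j \<le> d i j + \<alpha> * split_delta A B i j"
      using x ij unfolding LIP_def by blast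
    consider "i \<in> A" "j \<in> B" | "i \<in> B" "j \<in> A" | "split_delta A B i j = 0" "?v i = ?v j"
      using ij assms(3)
      by (auto simp: split_delta_def split_vector_left split_vector_right)
    then show ?thesis
    proof cases
      case 1
      then show ?thesis using lower split_vector_cross[OF assms(1-3) 1] by force
    next
      case 2
      have "L \<le> x j - x i + d i j"
        using upper 2 by blast
      then show ?thesis
        using split_vector_cross[OF assms(1-3) 2(2,1)] by (simp add: algebra_simps)
    next
      case 3
      then show ?thesis using x_ij by simp
    qed
  qed
  show ?thesis
    unfolding LIP_def
  proof (intro CollectI conjI allI impI ballI)
    fix i
    assume "i \<notin> A \<union> B"
    then show "x i - L * ?v i = 0"
      using x split_vector_outside[of i A B] unfolding LIP_def by simp
  next
    show "(\<Sum>i\<in>A \<union> B. x i - L * ?v i) = 0"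
      using x sum_split_vector[OF assms(1-3)]
      unfolding LIP_def by (simp add: sum_subtractf flip: sum_distrib_left)
  next
    fix i j
    assume "i \<in> A \<union> B" "j \<in> A \<union> B"
    then show "x i - L * ?v i - (x j - L * ?v j) \<le> d i j"
      using lip by (simp add: algebra_simps)
  qed
qed

lemma ex_between_finite_bounds:
  fixes Lo Up :: "real set"
  assumes "finite Lo" "Lo \<noteq> {}" "\<forall>l\<in>Lo. \<forall>u\<in>Up. l \<le> u"
  shows "\<exists>t. (\<forall>l\<in>Lo. l \<le> t) \<and> (\<forall>u\<in>Up. t \<le> u)"
  using assms by (intro exI[of _ "Max Lo"]) auto

lemma LIP_split_decompose:
  assumes "finite A" "finite B" "A \<inter> B = {}"
    and d: "pseudometric_on (A \<union> B) d" and d_A: "\<forall>i\<in>A. \<forall>j\<in>A. d i j = 0"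
    and "\<alpha> \<ge> 0"
    and x: "x \<in> LIP (A \<union> B) (\<lambda>i j. d i j + \<alpha> * split_delta A B i j)"
  shows "\<exists>s. \<bar>s\<bar> \<le> \<alpha> \<and> (\<lambda>i. x i - s * split_vector A B i) \<in> LIP (A \<union> B) d"
proof -
  let ?Lo = "insert (-\<alpha>) ((\<lambda>(i, j). x i - x j - d i j) ` (A \<times> B))"
  let ?Up = "insert \<alpha> ((\<lambda>(i, j). x i - x j + d j i) ` (A \<times> B))"
  have x_ij: "x i - x j \<le> d i j + \<alpha> * split_delta A B i j" if "i \<in> A \<union> B" "j \<in> A \<union> B" for i j
    using x that unfolding LIP_def by blast
  have triangle: "d i k \<le> d i j + d j k" if "i \<in> A \<union> B" "j \<in> A \<union> B" "k \<in> A \<union> B" for i j k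
    using d that unfolding pseudometric_on_def by blast
  have "x i - x j - d i j \<le> x i' - x j' + d j' i'"
    if "i \<in> A" "j \<in> B" "i' \<in> A" "j' \<in> B" for i j i' j'
  proof -
    have "x i - x i' \<le> 0" "x j' - x j \<le> d j' j"
      using x_ij[of i i'] x_ij[of j' j] d_A that assms(3) by (auto simp: split_delta_def)
    moreover have "d j' j \<le> d j' i' + d i' i + d i j"
      using triangle[of j' i' j] triangle[of i' i j] that by auto
    ultimately show ?thesis
      using d_A that by simp
  qed
  moreover have "x i - x j - d i j \<le> \<alpha>" "-\<alpha> \<le> x i - x j + d j i" if "i \<in> A" "j \<in> B" for i j
  proof -
    have "i \<notin> B" "j \<notin> A"
      using that assms(3) by blast+
    then show "x i - x j - d i j \<le> \<alpha>" "-\<alpha> \<le> x i - x j + d j i"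
      using x_ij[of i j] x_ij[of j i] that by (auto simp: split_delta_def)
  qed
  ultimately have "\<forall>l\<in>?Lo. \<forall>u\<in>?Up. l \<le> u"
    using \<open>\<alpha> \<ge> 0\<close> by auto
  then obtain L where L_lower: "\<forall>l\<in>?Lo. l \<le> L" and L_upper: "\<forall>u\<in>?Up. L \<le> u"
    using ex_between_finite_bounds[of ?Lo ?Up] assms(1,2) by blast
  have "(\<lambda>i. x i - L * split_vector A B i) \<in> LIP (A \<union> B) d"
    using L_lower L_upper by (intro LIP_diff_split_vector[OF assms(1-3) x]) auto
  moreover have "\<bar>L\<bar> \<le> \<alpha>"
    using L_lower L_upper by auto
  ultimately show ?thesis
    by blast
qed

theorem mainTheorem3:
  fixes X A :: "'a set" and d :: "'a \<Rightarrow> 'a \<Rightarrow> real" and \<alpha> :: real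
  assumes "finite X"
    and "pseudometric_on X d"
    and "A \<subseteq> X" and "A \<noteq> {}" and "A \<noteq> X"
    and "\<forall>i\<in>A. \<forall>j\<in>A. d i j = 0"
    and "\<alpha> \<ge> 0"
  shows "LIP X (\<lambda>i j. d i j + \<alpha> * split_delta A (X - A) i j)
         = minkowski_sum (LIP X d) ((\<lambda>v i. \<alpha> * v i) ` split_segment A (X - A))"
proof -
  define B where "B = X - A"
  have X: "X = A \<union> B" and disjoint: "A \<inter> B = {}"
    using assms(3) unfolding B_def by auto
  have finite: "finite A" "finite B"
    using assms(1) unfolding X by simp_all
  have "x \<in> LIP (A \<union> B) (\<lambda>i j. d i j + \<alpha> * split_delta A B i j)
        \<longleftrightarrow> (\<exists>s. \<bar>s\<bar> \<le> \<alpha> \<and> (\<lambda>i. x i - s * split_vector A B i) \<in> LIP (A \<union> B) d)" for x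
  proof
    assume "x \<in> LIP (A \<union> B) (\<lambda>i j. d i j + \<alpha> * split_delta A B i j)"
    then show "\<exists>s. \<bar>s\<bar> \<le> \<alpha> \<and> (\<lambda>i. x i - s * split_vector A B i) \<in> LIP (A \<union> B) d"
      using LIP_split_decompose[OF finite disjoint] assms(2,6,7) unfolding X by blast
  next
    assume "\<exists>s. \<bar>s\<bar> \<le> \<alpha> \<and> (\<lambda>i. x i - s * split_vector A B i) \<in> LIP (A \<union> B) d"
    then show "x \<in> LIP (A \<union> B) (\<lambda>i j. d i j + \<alpha> * split_delta A B i j)"
      using LIP_add_split_vector[OF finite disjoint] by fastforce
  qed
  then have "LIP X (\<lambda>i j. d i j + \<alpha> * split_delta A B i j)
             = minkowski_sum (LIP X d) {(\<lambda>i. s * split_vector A B i) | s. \<bar>s\<bar> \<le> \<alpha>}"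
    unfolding set_eq_iff mem_minkowski_sum_scaled X by blast
  then show ?thesis
    unfolding B_def scaled_split_segment_eq[OF assms(7)] .
qed

end
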